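(* For all positive integers $n$, $\det A(n)=1$.
   Context: For a positive integer $n$, the $n\times n$ matrix $A(n)=(A_{n,i,j})_{0\le i,j\le n-1}$ (entries rational functions in indeterminates $x,y$) is defined by $A_{n,i,j}=\frac{(1+x)(1+y)}{xy}$ if $i=j<n-1$; $A_{n,i,j}=-\frac1{xy}$ if $i=j-1<n-1$; $A_{n,n-1,n-1}=\frac{xy-(n-1)(x+y)}{xy}$; for $i=n-1$ and $j<n-1$, $$A_{n,n-1,j}=\frac{(-1)^{n+j}}{xy}\sum_{l=j}^{n}\left(\binom lj\binom{n+j-1-l}{j}x^{l-j}y^{n-1-l}+\binom lj\binom{n+j-l}{j}x^{l-j}y^{n-l}\right);$$ and $A_{n,i,j}=0$ otherwise. Binomial coefficients $\binom ab$ are $0$ if $b<0$ or $a<b$. *)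

theory Defs
  imports "Jordan_Normal_Form.Determinant"
begin

definition ibinom :: "int \<Rightarrow> nat \<Rightarrow> nat" where
  "ibinom a b = (if a < int b then 0 else nat a choose b)"

text \<open>Entry (i,j) of A(n), 0-based indices, evaluated at x, y in a field.\<close>
definition A_entry :: "nat \<Rightarrow> 'a::field \<Rightarrow> 'a \<Rightarrow> nat \<Rightarrow> nat \<Rightarrow> 'a" where
  "A_entry n x y i j =
    (if i = j \<and> i < n - 1 then (1 + x) * (1 + y) / (x * y)
     else if i + 1 = j \<and> i < n - 1 then - 1 / (x * y)
     else if i = n - 1 \<and> j = n - 1 then (x * y - of_nat (n - 1) * (x + y)) / (x * y)
     else if i = n - 1 \<and> j < n - 1 then
       (-1) ^ (n + j) / (x * y) *
       (\<Sum>l = j..n.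
          of_nat (ibinom (int l) j * ibinom (int n + int j - 1 - int l) j) * x ^ (l - j) * y ^ (n - 1 - l)
        + of_nat (ibinom (int l) j * ibinom (int n + int j - int l) j) * x ^ (l - j) * y ^ (n - l))
     else 0)"

definition A_mat :: "nat \<Rightarrow> 'a::field \<Rightarrow> 'a \<Rightarrow> 'a mat" where
  "A_mat n x y = mat n n (\<lambda>(i, j). A_entry n x y i j)"

end

theory Submission
  imports Defs "HOL-Computational_Algebra.Formal_Power_Series"
begin

text \<open>
  Put p = xy and u = (1+x)(1+y).  Apart from its last row, A(n) is upper bidiagonal, so
  Laplace expansion along the first column gives p^n det A(n) as a signed sum of
  (-u)^j times the last-row entries.  Up to sign, the j-th entry is the sum of two adjacent
  coefficients of C_j = (1-xX)^{-(j+1)} (1-yX)^{-(j+1)}.  Because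
  (1-xX)(1-yX) + uX = (1+X)(1+pX), the series \<Sum>_j (-uX)^j C_j is the inverse of
  (1+X)(1+pX), whose coefficients r_k satisfy r_{k+1} + r_k = (-p)^{k+1}; this collapses the
  expansion to p^n.
\<close>

definition bidiagonal_last_row_mat :: "nat \<Rightarrow> 'a::comm_ring_1 \<Rightarrow> 'a \<Rightarrow> (nat \<Rightarrow> 'a) \<Rightarrow> 'a mat" where
  "bidiagonal_last_row_mat n d e a =
     mat n n (\<lambda>(i, j). if i + 1 < n then (if j = i then d else if j = i + 1 then e else 0) else a j)"

lemma det_bidiagonal_last_row_mat:
  "det (bidiagonal_last_row_mat (Suc n) d e a) = (\<Sum>j\<le>n. a j * d ^ j * (- e) ^ (n - j))"
proof (induction n arbitrary: a)
  case 0
  have "det (bidiagonal_last_row_mat (Suc 0) d e a) = bidiagonal_last_row_mat (Suc 0) d e a $$ (0, 0)"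
    by (rule det_single) (simp add: bidiagonal_last_row_mat_def)
  then show ?case by (simp add: bidiagonal_last_row_mat_def)
next
  case (Suc n)
  define B where "B = bidiagonal_last_row_mat (Suc (Suc n)) d e a"
  have B: "B \<in> carrier_mat (Suc (Suc n)) (Suc (Suc n))"
    unfolding B_def bidiagonal_last_row_mat_def by simp
  have middle_rows: "(\<Sum>i<n. B $$ (Suc i, 0) * cofactor B (Suc i) 0) = 0"
    by (rule sum.neutral) (auto simp: B_def bidiagonal_last_row_mat_def)
  have "det B = (\<Sum>i<Suc (Suc n). B $$ (i, 0) * cofactor B i 0)"
    by (rule laplace_expansion_column[OF B]) simp
  also have "\<dots> = B $$ (Suc n, 0) * cofactor B (Suc n) 0 + B $$ (0, 0) * cofactor B 0 0"
    unfolding sum.lessThan_Suc[of _ "Suc n"] sum.lessThan_Suc_shift[of _ n] middle_rows by simp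
  finally have laplace: "det B = a 0 * cofactor B (Suc n) 0 + d * cofactor B 0 0"
    by (simp add: B_def bidiagonal_last_row_mat_def)
  have "mat_delete B 0 0 = bidiagonal_last_row_mat (Suc n) d e (\<lambda>j. a (Suc j))"
    by (rule eq_matI) (auto simp: B_def bidiagonal_last_row_mat_def mat_delete_def)
  then have minor_top: "cofactor B 0 0 = (\<Sum>j\<le>n. a (Suc j) * d ^ j * (- e) ^ (n - j))"
    by (simp add: cofactor_def Suc.IH)
  have lower: "mat_delete B (Suc n) 0 \<in> carrier_mat (Suc n) (Suc n)"
    using mat_delete_carrier[OF B] by simp
  have "det (mat_delete B (Suc n) 0) = prod_list (diag_mat (mat_delete B (Suc n) 0))"
    by (rule det_lower_triangular[OF _ lower]) (auto simp: B_def bidiagonal_last_row_mat_def mat_delete_def)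
  also have "\<dots> = (\<Prod>i = 0..<Suc n. e)"
    unfolding prod_list_diag_prod using lower
    by (intro prod.cong refl) (auto simp: B_def bidiagonal_last_row_mat_def mat_delete_def)
  finally have minor_bottom: "cofactor B (Suc n) 0 = (- e) ^ Suc n"
    by (simp add: cofactor_def power_minus[of e])
  show ?case
    unfolding B_def[symmetric] laplace minor_top minor_bottom sum.atMost_Suc_shift
    by (simp add: sum_distrib_left mult_ac)
qed

text \<open>The expansion of (1 - zX)^{-(j+1)}.\<close>

definition fps_neg_binomial :: "'a::comm_ring_1 \<Rightarrow> nat \<Rightarrow> 'a fps" where
  "fps_neg_binomial z j = Abs_fps (\<lambda>k. of_nat ((k + j) choose j) * z ^ k)"

lemma fps_nth_neg_binomial [simp]: "fps_nth (fps_neg_binomial z j) k = of_nat ((k + j) choose j) * z ^ k"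
  by (simp add: fps_neg_binomial_def)

lemma fps_neg_binomial_0: "(1 - fps_const z * fps_X) * fps_neg_binomial z 0 = 1"
proof (rule fps_ext)
  fix k
  show "fps_nth ((1 - fps_const z * fps_X) * fps_neg_binomial z 0) k = fps_nth 1 k"
    by (cases k) (simp_all add: algebra_simps)
qed

lemma fps_neg_binomial_Suc:
  "(1 - fps_const z * fps_X) * fps_neg_binomial z (Suc j) = fps_neg_binomial z j"
proof (rule fps_ext)
  fix k
  show "fps_nth ((1 - fps_const z * fps_X) * fps_neg_binomial z (Suc j)) k = fps_nth (fps_neg_binomial z j) k"
  proof (cases k)
    case (Suc i)
    have "(Suc i + Suc j) choose Suc j = ((i + Suc j) choose j) + ((i + Suc j) choose Suc j)"
      by simp
    then show ?thesis
      using Suc by (simp add: algebra_simps)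
  qed simp
qed

definition fps_neg_binomial_prod :: "'a::comm_ring_1 \<Rightarrow> 'a \<Rightarrow> nat \<Rightarrow> 'a fps" where
  "fps_neg_binomial_prod x y j = fps_neg_binomial x j * fps_neg_binomial y j"

lemma fps_neg_binomial_prod_0:
  "(1 - fps_const x * fps_X) * (1 - fps_const y * fps_X) * fps_neg_binomial_prod x y 0 = 1"
proof -
  have "(1 - fps_const x * fps_X) * (1 - fps_const y * fps_X) * fps_neg_binomial_prod x y 0 =
      ((1 - fps_const x * fps_X) * fps_neg_binomial x 0) * ((1 - fps_const y * fps_X) * fps_neg_binomial y 0)"
    unfolding fps_neg_binomial_prod_def by (simp only: ac_simps)
  then show ?thesis
    by (simp add: fps_neg_binomial_0)
qed

lemma fps_neg_binomial_prod_Suc: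
  "(1 - fps_const x * fps_X) * (1 - fps_const y * fps_X) * fps_neg_binomial_prod x y (Suc j)
     = fps_neg_binomial_prod x y j"
proof -
  have "(1 - fps_const x * fps_X) * (1 - fps_const y * fps_X) * fps_neg_binomial_prod x y (Suc j) =
      ((1 - fps_const x * fps_X) * fps_neg_binomial x (Suc j)) * ((1 - fps_const y * fps_X) * fps_neg_binomial y (Suc j))"
    unfolding fps_neg_binomial_prod_def by (simp only: ac_simps)
  then show ?thesis
    by (simp add: fps_neg_binomial_Suc fps_neg_binomial_prod_def)
qed

lemma fps_nth_neg_binomial_prod:
  assumes "j \<le> k"
  shows "fps_nth (fps_neg_binomial_prod x y j) (k - j) =
    (\<Sum>l = j..k. of_nat ((l choose j) * ((k + j - l) choose j)) * x ^ (l - j) * y ^ (k - l))"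
proof -
  have "fps_nth (fps_neg_binomial_prod x y j) (k - j) =
      (\<Sum>i = 0..k - j. of_nat ((i + j) choose j) * x ^ i * (of_nat ((k - j - i + j) choose j) * y ^ (k - j - i)))"
    unfolding fps_neg_binomial_prod_def fps_mult_nth by simp
  also have "\<dots> = (\<Sum>i = 0..k - j. of_nat (((i + j) choose j) * ((k + j - (i + j)) choose j))
                      * x ^ (i + j - j) * y ^ (k - (i + j)))"
    by (intro sum.cong refl) (use assms in \<open>auto simp: algebra_simps\<close>)
  also have "\<dots> = (\<Sum>l = 0 + j..k - j + j. of_nat ((l choose j) * ((k + j - l) choose j)) * x ^ (l - j) * y ^ (k - l))"
    by (rule sum.shift_bounds_cl_nat_ivl[symmetric])
  finally show ?thesis
    using assms by simp
qed

lemma fps_neg_binomial_prod_nth_0 [simp]: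
  "fps_nth (fps_neg_binomial_prod x y j) 0 = 1"
  by (simp add: fps_neg_binomial_prod_def)

lemma fps_neg_binomial_prod_nth_Suc_0 [simp]:
  "fps_nth (fps_neg_binomial_prod x y j) (Suc 0) = of_nat (Suc j) * (x + y)"
  by (simp add: fps_neg_binomial_prod_def algebra_simps)

lemma one_plus_X_mult_one_plus_const_X:
  fixes x y :: "'a::comm_ring_1"
  shows "(1 + fps_X) * (1 + fps_const (x * y) * fps_X)
    = (1 - fps_const x * fps_X) * (1 - fps_const y * fps_X) + fps_const ((1 + x) * (1 + y)) * fps_X"
proof -
  have "fps_const ((1 + x) * (1 + y)) = 1 + fps_const x + fps_const y + fps_const x * fps_const y"
    by (simp add: algebra_simps flip: fps_const_mult fps_const_add)
  moreover have "fps_const (x * y) = fps_const x * fps_const y"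
    by simp
  ultimately show ?thesis
    by (simp del: fps_const_mult fps_const_add add: algebra_simps)
qed

lemma fps_neg_binomial_prod_geometric_sum:
  fixes x y :: "'a::comm_ring_1"
  defines "u \<equiv> (1 + x) * (1 + y)"
  shows "(1 + fps_X) * (1 + fps_const (x * y) * fps_X) *
      (\<Sum>j\<le>N. fps_const ((- u) ^ j) * fps_X ^ j * fps_neg_binomial_prod x y j)
    = 1 - fps_const ((- u) ^ Suc N) * fps_X ^ Suc N * fps_neg_binomial_prod x y N"
proof -
  let ?D = "(1 + fps_X) * (1 + fps_const (x * y) * fps_X)"
  let ?C = "fps_neg_binomial_prod x y"
  define U where "U = fps_const u"
  have D: "?D = (1 - fps_const x * fps_X) * (1 - fps_const y * fps_X) + U * fps_X"
    unfolding one_plus_X_mult_one_plus_const_X U_def u_def ..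
  have step: "?D * ?C (Suc j) = ?C j + U * fps_X * ?C (Suc j)" for j
    unfolding D by (simp add: distrib_right fps_neg_binomial_prod_Suc)
  have powers: "fps_const ((- u) ^ k) = (- U) ^ k" for k
    unfolding U_def by (simp add: fps_const_power)
  have "?D * (\<Sum>j\<le>N. (- U) ^ j * fps_X ^ j * ?C j) = 1 - (- U) ^ Suc N * fps_X ^ Suc N * ?C N"
  proof (induction N)
    case 0
    show ?case
      unfolding D by (simp add: distrib_right fps_neg_binomial_prod_0)
  next
    case (Suc N)
    have "?D * (\<Sum>j\<le>Suc N. (- U) ^ j * fps_X ^ j * ?C j)
        = ?D * (\<Sum>j\<le>N. (- U) ^ j * fps_X ^ j * ?C j) + (- U) ^ Suc N * fps_X ^ Suc N * (?D * ?C (Suc N))"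
      by (simp only: sum.atMost_Suc distrib_left mult_ac)
    also have "\<dots> = 1 - (- U) ^ Suc (Suc N) * fps_X ^ Suc (Suc N) * ?C (Suc N)"
      unfolding Suc.IH step by (simp add: algebra_simps)
    finally show ?case .
  qed
  then show ?thesis
    unfolding powers .
qed

definition fps_inverse_quadratic :: "'a::comm_ring_1 \<Rightarrow> 'a fps" where
  "fps_inverse_quadratic p = fps_neg_binomial (- 1) 0 * fps_neg_binomial (- p) 0"

lemma fps_neg_binomial_0_uminus: "(1 + fps_const z * fps_X) * fps_neg_binomial (- z) 0 = 1"
  using fps_neg_binomial_0[of "- z"] by (simp flip: fps_const_neg)

lemma one_plus_X_mult_inverse_quadratic:
  fixes p :: "'a::comm_ring_1"
  shows "(1 + fps_X) * fps_inverse_quadratic p = fps_neg_binomial (- p) 0"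
  using fps_neg_binomial_0_uminus[of "1 :: 'a"] unfolding fps_inverse_quadratic_def
  by (simp add: mult.assoc[symmetric])

lemma fps_inverse_quadratic_mult: "(1 + fps_X) * (1 + fps_const p * fps_X) * fps_inverse_quadratic p = 1"
proof -
  have "(1 + fps_X) * (1 + fps_const p * fps_X) * fps_inverse_quadratic p
      = (1 + fps_const p * fps_X) * ((1 + fps_X) * fps_inverse_quadratic p)"
    by (simp only: mult_ac)
  then show ?thesis
    unfolding one_plus_X_mult_inverse_quadratic fps_neg_binomial_0_uminus .
qed

lemma fps_nth_inverse_quadratic_Suc:
  "fps_nth (fps_inverse_quadratic p) (Suc k) + fps_nth (fps_inverse_quadratic p) k = (- p) ^ Suc k"
  using arg_cong[OF one_plus_X_mult_inverse_quadratic, of "\<lambda>f. fps_nth f (Suc k)"]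
  by (simp add: algebra_simps)

lemma sum_fps_nth_neg_binomial_prod:
  fixes x y :: "'a::comm_ring_1"
  defines "u \<equiv> (1 + x) * (1 + y)"
  shows "(\<Sum>j\<le>k. (- u) ^ j * fps_nth (fps_neg_binomial_prod x y j) (k - j))
    = fps_nth (fps_inverse_quadratic (x * y)) k"
proof -
  let ?D = "(1 + fps_X) * (1 + fps_const (x * y) * fps_X)"
  let ?R = "fps_inverse_quadratic (x * y)"
  define H where "H = (\<Sum>j\<le>k. fps_const ((- u) ^ j) * fps_X ^ j * fps_neg_binomial_prod x y j)"
  define T where "T = ?R * fps_const ((- u) ^ Suc k) * fps_neg_binomial_prod x y k"
  have "H = ?R * (?D * H)"
    using fps_inverse_quadratic_mult[of "x * y"] by (simp add: mult_ac)
  also have "\<dots> = ?R - fps_X ^ Suc k * T"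
    unfolding H_def u_def fps_neg_binomial_prod_geometric_sum T_def by (simp add: algebra_simps)
  finally have "fps_nth H k = fps_nth ?R k"
    by (simp only: fps_sub_nth fps_X_power_mult_nth) simp
  moreover have "fps_nth H k = (\<Sum>j\<le>k. (- u) ^ j * fps_nth (fps_neg_binomial_prod x y j) (k - j))"
    unfolding H_def fps_sum_nth by (intro sum.cong refl) (simp add: fps_X_power_mult_nth mult.assoc)
  ultimately show ?thesis
    by simp
qed

lemma ibinom_of_nat: "ibinom (int a) b = a choose b"
  unfolding ibinom_def by (auto simp: binomial_eq_0)

lemma sum_ibinom_eq_fps_nth_neg_binomial_prod:
  fixes x y :: "'a::comm_ring_1"
  assumes "j \<le> k" and "k \<le> K"
  shows "(\<Sum>l = j..K. of_nat (ibinom (int l) j * ibinom (int k + int j - int l) j) * x ^ (l - j) * y ^ (k - l))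
    = fps_nth (fps_neg_binomial_prod x y j) (k - j)"
proof -
  have "(\<Sum>l = j..K. of_nat (ibinom (int l) j * ibinom (int k + int j - int l) j) * x ^ (l - j) * y ^ (k - l))
      = (\<Sum>l = j..k. of_nat (ibinom (int l) j * ibinom (int k + int j - int l) j) * x ^ (l - j) * y ^ (k - l))"
  proof (rule sum.mono_neutral_right)
    show "\<forall>l\<in>{j..K} - {j..k}.
        of_nat (ibinom (int l) j * ibinom (int k + int j - int l) j) * x ^ (l - j) * y ^ (k - l) = 0"
    proof
      fix l
      assume "l \<in> {j..K} - {j..k}"
      then have "int k + int j - int l < int j"
        by auto
      then show "of_nat (ibinom (int l) j * ibinom (int k + int j - int l) j) * x ^ (l - j) * y ^ (k - l) = 0"
        by (simp add: ibinom_def)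
    qed
  qed (use assms in auto)
  also have "\<dots> = (\<Sum>l = j..k. of_nat ((l choose j) * ((k + j - l) choose j)) * x ^ (l - j) * y ^ (k - l))"
  proof (rule sum.cong[OF refl])
    fix l
    assume "l \<in> {j..k}"
    then have "int k + int j - int l = int (k + j - l)"
      by auto
    then show "of_nat (ibinom (int l) j * ibinom (int k + int j - int l) j) * x ^ (l - j) * y ^ (k - l)
        = of_nat ((l choose j) * ((k + j - l) choose j)) * x ^ (l - j) * y ^ (k - l)"
      by (simp only: ibinom_of_nat)
  qed
  finally show ?thesis
    unfolding fps_nth_neg_binomial_prod[OF assms(1)] .
qed

lemma A_entry_last_row:
  fixes x y :: "'a::field"
  assumes "j < m"
  shows "A_entry (Suc m) x y m j = (- 1) ^ (Suc m + j) / (x * y) *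
    (fps_nth (fps_neg_binomial_prod x y j) (m - j) + fps_nth (fps_neg_binomial_prod x y j) (Suc m - j))"
proof -
  have shift: "int (Suc m) + int j - 1 - int l = int m + int j - int l" "Suc m - 1 - l = m - l" for l
    by simp_all
  have "A_entry (Suc m) x y m j = (- 1) ^ (Suc m + j) / (x * y) *
      (\<Sum>l = j..Suc m.
          of_nat (ibinom (int l) j * ibinom (int (Suc m) + int j - 1 - int l) j) * x ^ (l - j) * y ^ (Suc m - 1 - l)
        + of_nat (ibinom (int l) j * ibinom (int (Suc m) + int j - int l) j) * x ^ (l - j) * y ^ (Suc m - l))"
    using assms unfolding A_entry_def by simp
  also have "\<dots> = (- 1) ^ (Suc m + j) / (x * y) *
      (fps_nth (fps_neg_binomial_prod x y j) (m - j) + fps_nth (fps_neg_binomial_prod x y j) (Suc m - j))"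
    using assms unfolding sum.distrib shift
    by (simp only: sum_ibinom_eq_fps_nth_neg_binomial_prod less_imp_le le_SucI order_refl)
  finally show ?thesis .
qed

lemma A_entry_corner:
  "A_entry (Suc m) x y m m = (x * y - of_nat m * (x + y)) / (x * y)"
  unfolding A_entry_def by simp

lemma A_mat_eq_bidiagonal_last_row_mat:
  "A_mat (Suc m) x y =
    bidiagonal_last_row_mat (Suc m) ((1 + x) * (1 + y) / (x * y)) (- 1 / (x * y)) (A_entry (Suc m) x y m)"
  by (rule eq_matI) (auto simp: A_mat_def bidiagonal_last_row_mat_def A_entry_def)

lemma last_row_expansion_eq:
  fixes x y :: "'a::comm_ring_1"
  defines "u \<equiv> (1 + x) * (1 + y)" and "p \<equiv> x * y"
  shows "(- 1) ^ Suc m * (\<Sum>j<m. (- u) ^ j *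
      (fps_nth (fps_neg_binomial_prod x y j) (m - j) + fps_nth (fps_neg_binomial_prod x y j) (Suc m - j)))
    + (p - of_nat m * (x + y)) * u ^ m = p ^ Suc m"
proof -
  let ?c = "\<lambda>j k. (- u) ^ j * fps_nth (fps_neg_binomial_prod x y j) (k - j)"
  let ?r = "fps_nth (fps_inverse_quadratic p)"
  have r_m: "(\<Sum>j<m. ?c j m) + (- u) ^ m = ?r m"
    using sum_fps_nth_neg_binomial_prod[of x y m]
    by (simp add: u_def p_def lessThan_Suc_atMost[symmetric])
  have r_Suc_m: "(\<Sum>j<m. ?c j (Suc m)) + (- u) ^ m * (of_nat (Suc m) * (x + y)) + (- u) ^ Suc m = ?r (Suc m)"
    using sum_fps_nth_neg_binomial_prod[of x y "Suc m"]
    by (simp add: u_def p_def lessThan_Suc_atMost[symmetric] Suc_diff_le)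
  have "(\<Sum>j<m. (- u) ^ j *
      (fps_nth (fps_neg_binomial_prod x y j) (m - j) + fps_nth (fps_neg_binomial_prod x y j) (Suc m - j)))
      = (\<Sum>j<m. ?c j m) + (\<Sum>j<m. ?c j (Suc m))"
    by (simp add: distrib_left sum.distrib)
  also have "\<dots> = (?r (Suc m) + ?r m) - (- u) ^ m * (1 + of_nat (Suc m) * (x + y)) - (- u) ^ Suc m"
    unfolding r_m[symmetric] r_Suc_m[symmetric] by (simp add: algebra_simps)
  also have "\<dots> = (- p) ^ Suc m - (- u) ^ m * (1 + of_nat (Suc m) * (x + y)) - (- u) ^ Suc m"
    unfolding fps_nth_inverse_quadratic_Suc ..
  finally have signed_sum: "(- 1) ^ Suc m * (\<Sum>j<m. (- u) ^ j *
      (fps_nth (fps_neg_binomial_prod x y j) (m - j) + fps_nth (fps_neg_binomial_prod x y j) (Suc m - j)))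
      = p ^ Suc m + u ^ m * (1 + of_nat (Suc m) * (x + y)) - u ^ Suc m"
    by (cases "even m") (simp_all add: power_minus[of p] power_minus[of u] algebra_simps)
  have "p ^ Suc m + u ^ m * (1 + of_nat (Suc m) * (x + y)) - u ^ Suc m + (p - of_nat m * (x + y)) * u ^ m
      = p ^ Suc m + u ^ m * (1 + x + y + p - u)"
    by (simp add: algebra_simps)
  also have "1 + x + y + p - u = 0"
    by (simp add: u_def p_def algebra_simps)
  finally show ?thesis
    unfolding signed_sum by simp
qed

lemma det_A_mat_Suc:
  fixes x y :: "'a::field"
  assumes "x * y \<noteq> 0"
  defines "u \<equiv> (1 + x) * (1 + y)" and "p \<equiv> x * y"
  shows "p ^ Suc m * det (A_mat (Suc m) x y) =
    (- 1) ^ Suc m * (\<Sum>j<m. (- u) ^ j *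
      (fps_nth (fps_neg_binomial_prod x y j) (m - j) + fps_nth (fps_neg_binomial_prod x y j) (Suc m - j)))
    + (p - of_nat m * (x + y)) * u ^ m"
proof -
  let ?a = "A_entry (Suc m) x y m"
  let ?S = "\<lambda>j. fps_nth (fps_neg_binomial_prod x y j) (m - j) + fps_nth (fps_neg_binomial_prod x y j) (Suc m - j)"
  have scale: "p ^ Suc m * ((u / p) ^ j * (1 / p) ^ (m - j)) = p * u ^ j" if "j \<le> m" for j
  proof -
    obtain k where "m = j + k"
      using \<open>j \<le> m\<close> le_Suc_ex by blast
    then show ?thesis
      using assms(1) by (simp add: p_def power_add power_divide field_simps)
  qed
  have "p ^ Suc m * det (A_mat (Suc m) x y) = (\<Sum>j\<le>m. p ^ Suc m * (?a j * ((u / p) ^ j * (1 / p) ^ (m - j))))"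
    unfolding A_mat_eq_bidiagonal_last_row_mat det_bidiagonal_last_row_mat u_def p_def
    by (simp add: sum_distrib_left mult.assoc)
  also have "\<dots> = (\<Sum>j\<le>m. ?a j * p * u ^ j)"
  proof (rule sum.cong[OF refl])
    fix j
    assume "j \<in> {..m}"
    then have "p ^ Suc m * ((u / p) ^ j * (1 / p) ^ (m - j)) = p * u ^ j"
      using scale by simp
    then show "p ^ Suc m * (?a j * ((u / p) ^ j * (1 / p) ^ (m - j))) = ?a j * p * u ^ j"
      by (metis mult.assoc mult.left_commute)
  qed
  also have "\<dots> = (\<Sum>j<m. (- 1) ^ Suc m * ((- u) ^ j * ?S j)) + (p - of_nat m * (x + y)) * u ^ m"
  proof -
    have "?a j * p * u ^ j = (- 1) ^ Suc m * ((- u) ^ j * ?S j)" if "j < m" for j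
      using assms(1) unfolding A_entry_last_row[OF that] p_def
      by (simp add: power_add power_minus[of u])
    moreover have "?a m * p * u ^ m = (p - of_nat m * (x + y)) * u ^ m"
      using assms(1) unfolding A_entry_corner p_def by simp
    ultimately show ?thesis
      by (simp add: lessThan_Suc_atMost[symmetric])
  qed
  finally show ?thesis
    by (simp add: sum_distrib_left)
qed

theorem lemma6:
  fixes x y :: "'a::field"
  assumes "x \<noteq> 0" and "y \<noteq> 0" and "n \<ge> 1"
  shows "det (A_mat n x y) = 1"
proof -
  obtain m where n: "n = Suc m"
    using assms(3) by (cases n) auto
  have p: "x * y \<noteq> 0"
    using assms(1,2) by simp
  have "(x * y) ^ Suc m * det (A_mat n x y) = (x * y) ^ Suc m"
    unfolding n det_A_mat_Suc[OF p] last_row_expansion_eq ..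
  then show ?thesis
    using p by simp
qed

end
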